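(* Let $\Gamma\curvearrowright(X,\mu)$ be an essentially free, probability measure preserving, weakly mixing action. Then the commensurator of $\Gamma$ inside $\mathrm{Aut}(X,\mu)$ acts essentially freely on $(X,\mu)$: if $\Delta$ belongs to this commensurator and $x\cdot\Delta=x$ for all $x$ in a non-negligible subset of $X$, then $x\cdot\Delta=x$ for almost every $x\in X$.
   Context: $\mathrm{Aut}(X,\mu)$ is the group of measure preserving automorphisms modulo null sets, acting on the right, containing $\Gamma$. The commensurator consists of $\Delta$ with $\Gamma\cap\Delta\Gamma\Delta^{-1}$ of finite index in both $\Gamma$ and $\Delta\Gamma\Delta^{-1}$. *)

theory Defs
  imports "HOL-Probability.Probability" "HOL-Algebra.Coset"
begin

definition mp_map :: "'a measure \<Rightarrow> ('a \<Rightarrow> 'a) \<Rightarrow> bool" where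
  "mp_map M T \<longleftrightarrow> T \<in> M \<rightarrow>\<^sub>M M \<and> distr M M T = M"

text \<open>Elements of Aut(X,mu): measure preserving maps invertible modulo null sets.
  Two such maps represent the same element iff they agree almost everywhere.\<close>
definition aut :: "'a measure \<Rightarrow> ('a \<Rightarrow> 'a) \<Rightarrow> bool" where
  "aut M T \<longleftrightarrow> mp_map M T \<and>
     (\<exists>S. mp_map M S \<and> (AE x in M. S (T x) = x) \<and> (AE x in M. T (S x) = x))"

text \<open>A right action of the group Gamma on (X,mu) by measure preserving automorphisms,
  i.e. a homomorphism of Gamma into Aut(X,mu) (equalities modulo null sets);
  x . g is written  a g x, and x . (g h) = (x . g) . h.\<close>
definition pmp_right_action :: "'g monoid \<Rightarrow> 'a measure \<Rightarrow> ('g \<Rightarrow> 'a \<Rightarrow> 'a) \<Rightarrow> bool" where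
  "pmp_right_action \<Gamma> M a \<longleftrightarrow> group \<Gamma> \<and> prob_space M \<and>
     (\<forall>g\<in>carrier \<Gamma>. mp_map M (a g)) \<and>
     (AE x in M. a \<one>\<^bsub>\<Gamma>\<^esub> x = x) \<and>
     (\<forall>g\<in>carrier \<Gamma>. \<forall>h\<in>carrier \<Gamma>. AE x in M. a (g \<otimes>\<^bsub>\<Gamma>\<^esub> h) x = a h (a g x))"

definition essentially_free :: "'g monoid \<Rightarrow> 'a measure \<Rightarrow> ('g \<Rightarrow> 'a \<Rightarrow> 'a) \<Rightarrow> bool" where
  "essentially_free \<Gamma> M a \<longleftrightarrow> (\<forall>g\<in>carrier \<Gamma>. g \<noteq> \<one>\<^bsub>\<Gamma>\<^esub> \<longrightarrow> (AE x in M. a g x \<noteq> x))"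

definition ergodic :: "'g monoid \<Rightarrow> 'a measure \<Rightarrow> ('g \<Rightarrow> 'a \<Rightarrow> 'a) \<Rightarrow> bool" where
  "ergodic \<Gamma> M a \<longleftrightarrow> (\<forall>A\<in>sets M.
     (\<forall>g\<in>carrier \<Gamma>. AE x in M. (a g x \<in> A \<longleftrightarrow> x \<in> A)) \<longrightarrow>
       emeasure M A = 0 \<or> emeasure M A = 1)"

definition weakly_mixing :: "'g monoid \<Rightarrow> 'a measure \<Rightarrow> ('g \<Rightarrow> 'a \<Rightarrow> 'a) \<Rightarrow> bool" where
  "weakly_mixing \<Gamma> M a \<longleftrightarrow> ergodic \<Gamma> (M \<Otimes>\<^sub>M M) (\<lambda>g (x, y). (a g x, a g y))"

text \<open>For the automorphism D and
  g, h in Gamma, "g = D h D^-1" in Aut(X,mu) (right action convention) means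
  x.D.h = x.g.D for a.e. x.  The subgroup Gamma \<inter> D Gamma D^-1 of Gamma is comm_left,
  and its preimage in Gamma under the isomorphism h \<mapsto> D h D^-1 of Gamma onto
  D Gamma D^-1 is comm_right.\<close>
definition comm_left :: "'g monoid \<Rightarrow> 'a measure \<Rightarrow> ('g \<Rightarrow> 'a \<Rightarrow> 'a) \<Rightarrow> ('a \<Rightarrow> 'a) \<Rightarrow> 'g set" where
  "comm_left \<Gamma> M a D = {g \<in> carrier \<Gamma>. \<exists>h\<in>carrier \<Gamma>. AE x in M. a h (D x) = D (a g x)}"

definition comm_right :: "'g monoid \<Rightarrow> 'a measure \<Rightarrow> ('g \<Rightarrow> 'a \<Rightarrow> 'a) \<Rightarrow> ('a \<Rightarrow> 'a) \<Rightarrow> 'g set" where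
  "comm_right \<Gamma> M a D = {h \<in> carrier \<Gamma>. \<exists>g\<in>carrier \<Gamma>. AE x in M. a h (D x) = D (a g x)}"

definition in_commensurator :: "'g monoid \<Rightarrow> 'a measure \<Rightarrow> ('g \<Rightarrow> 'a \<Rightarrow> 'a) \<Rightarrow> ('a \<Rightarrow> 'a) \<Rightarrow> bool" where
  "in_commensurator \<Gamma> M a D \<longleftrightarrow> aut M D \<and>
     finite (rcosets\<^bsub>\<Gamma>\<^esub> (comm_left \<Gamma> M a D)) \<and>
     finite (rcosets\<^bsub>\<Gamma>\<^esub> (comm_right \<Gamma> M a D))"

end

theory Submission
  imports Defs "HOL-Algebra.Left_Coset"
begin

text \<open>Let \<open>C\<close> be the centralizer of \<open>D\<close> in \<open>\<Gamma>\<close>. If \<open>g \<in> \<Gamma> \<inter> D\<Gamma>D\<inverse>\<close>, say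
  \<open>g = DhD\<inverse>\<close>, and \<open>g \<notin> C\<close>, then \<open>h \<noteq> g\<close>, and freeness of \<open>h\<inverse>g\<close> shows that \<open>A\<close> and
  \<open>A\<cdot>g\<inverse>\<close> are almost disjoint, since \<open>D\<close> fixes \<open>A\<close>. So the translates of \<open>A\<close> by
  representatives of distinct left cosets of \<open>C\<close> in \<open>\<Gamma> \<inter> D\<Gamma>D\<inverse>\<close> are almost disjoint,
  there are at most \<open>1/\<mu>(A)\<close> such cosets, and \<open>C\<close> has finite index in \<open>\<Gamma>\<close>. Weak mixing
  makes every finite-index subgroup act ergodically, so the \<open>C\<close>-saturation of \<open>A\<close> is
  conull, and \<open>D\<close>, commuting with \<open>C\<close>, fixes it pointwise.\<close>

lemma AE_mp_map:
  assumes "mp_map M T" "AE y in M. P y"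
  shows "AE x in M. P (T x)"
proof -
  from assms(2) obtain N where N: "{y\<in>space M. \<not> P y} \<subseteq> N" "N \<in> null_sets M"
    by (auto elim!: AE_E)
  have T: "T \<in> M \<rightarrow>\<^sub>M M" and distr: "distr M M T = M"
    using assms(1) by (auto simp: mp_map_def)
  have "emeasure M (T -` N \<inter> space M) = emeasure (distr M M T) N"
    using T null_setsD2[OF N(2)] by (simp add: emeasure_distr)
  then have "emeasure M (T -` N \<inter> space M) = 0"
    using distr N by auto
  moreover have "T -` N \<inter> space M \<in> sets M"
    using T N by (auto intro: measurable_sets)
  moreover have "{x\<in>space M. \<not> P (T x)} \<subseteq> T -` N \<inter> space M"
    using N(1) T by (auto dest: measurable_space)
  ultimately show ?thesis by (intro AE_I'[where N="T -` N \<inter> space M"]) auto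
qed

lemma AE_pair_fst:
  assumes "sigma_finite_measure N" "AE x in M. P x"
  shows "AE z in M \<Otimes>\<^sub>M N. P (fst z)"
proof -
  from assms(2) obtain Z where Z: "{x\<in>space M. \<not> P x} \<subseteq> Z" "Z \<in> null_sets M"
    by (auto elim!: AE_E)
  have "Z \<times> space N \<in> null_sets (M \<Otimes>\<^sub>M N)"
    using Z by (intro sigma_finite_measure.times_in_null_sets1[OF assms(1)]) auto
  moreover have "{z\<in>space (M \<Otimes>\<^sub>M N). \<not> P (fst z)} \<subseteq> Z \<times> space N"
    using Z(1) by (auto simp: space_pair_measure)
  ultimately show ?thesis by (intro AE_I') auto
qed

lemma AE_pair_snd:
  assumes "sigma_finite_measure N" "AE y in N. P y"
  shows "AE z in M \<Otimes>\<^sub>M N. P (snd z)"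
proof -
  from assms(2) obtain Z where Z: "{y\<in>space N. \<not> P y} \<subseteq> Z" "Z \<in> null_sets N"
    by (auto elim!: AE_E)
  have "space M \<times> Z \<in> null_sets (M \<Otimes>\<^sub>M N)"
    using Z by (intro sigma_finite_measure.times_in_null_sets2[OF assms(1)]) auto
  moreover have "{z\<in>space (M \<Otimes>\<^sub>M N). \<not> P (snd z)} \<subseteq> space M \<times> Z"
    using Z(1) by (auto simp: space_pair_measure)
  ultimately show ?thesis by (intro AE_I') auto
qed

lemma exists_positive_atom:
  assumes "finite K" "\<And>k. k \<in> K \<Longrightarrow> B k \<in> sets M" "emeasure M (space M) > 0"
  shows "\<exists>P\<in>sets M. emeasure M P > 0 \<and> (\<forall>k\<in>K. P \<subseteq> B k \<or> P \<inter> B k = {})"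
  using assms
proof (induction K rule: finite_induct)
  case (insert k K)
  then obtain P where P: "P \<in> sets M" "emeasure M P > 0" "\<forall>j\<in>K. P \<subseteq> B j \<or> P \<inter> B j = {}"
    by auto
  have Bk: "B k \<in> sets M" using insert.prems by simp
  have "emeasure M (P \<inter> B k) + emeasure M (P - B k) = emeasure M P"
    using P(1) Bk by (metis Diff_Diff_Int Diff_disjoint Int_Diff_Un inf_commute plus_emeasure sets.Diff sets.Int)
  then have "emeasure M (P \<inter> B k) > 0 \<or> emeasure M (P - B k) > 0"
    using P(2) by (metis add.left_neutral not_gr_zero)
  then show ?case
  proof
    assume "emeasure M (P \<inter> B k) > 0"
    then show ?case using P Bk by (intro bexI[of _ "P \<inter> B k"]) auto
  next
    assume "emeasure M (P - B k) > 0"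
    then show ?case using P Bk by (intro bexI[of _ "P - B k"]) auto
  qed
qed (auto intro: bexI[of _ "space M"])

lemma (in prob_space) emeasure_0_or_1_if_AE_pair_agree:
  assumes U: "U \<in> sets M" and agree: "AE z in M \<Otimes>\<^sub>M M. fst z \<in> U \<longleftrightarrow> snd z \<in> U"
  shows "emeasure M U = 0 \<or> emeasure M U = 1"
proof -
  have "emeasure (M \<Otimes>\<^sub>M M) (U \<times> (space M - U)) \<le> emeasure (M \<Otimes>\<^sub>M M) {}"
    by (rule emeasure_mono_AE) (use agree in \<open>eventually_elim, auto\<close>)
  then have "emeasure M U * emeasure M (space M - U) = 0"
    using U by (simp add: emeasure_pair_measure_Times)
  then have "measure M U = 0 \<or> measure M (space M - U) = 0"
    by (simp add: emeasure_eq_measure ennreal_mult'[symmetric])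
  then show ?thesis
    using prob_compl[OF U] by (auto simp: emeasure_eq_measure)
qed

lemma (in prob_space) card_mult_measure_le_1:
  assumes "finite T" "\<And>t. t \<in> T \<Longrightarrow> F t \<in> sets M" "\<And>t. t \<in> T \<Longrightarrow> measure M (F t) = m"
    and "pairwise (\<lambda>s t. AE x in M. x \<notin> F s \<or> x \<notin> F t) T"
  shows "real (card T) * m \<le> 1"
proof -
  have "real (card T) * m = measure M (\<Union>t\<in>T. F t)"
    using assms by (subst measure_UNION_AE) (auto simp: fmeasurable_eq_sets)
  also have "\<dots> \<le> 1" by (rule prob_le_1)
  finally show ?thesis .
qed

definition (in group) finite_index_in :: "'a set \<Rightarrow> 'a set \<Rightarrow> bool" where
  "finite_index_in H K \<longleftrightarrow> (\<exists>T \<subseteq> carrier G. finite T \<and> K \<subseteq> (\<Union>t\<in>T. t <#\<^bsub>G\<^esub> H))"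

lemma (in group) finite_index_in_trans:
  assumes H: "H \<subseteq> carrier G" and "finite_index_in H K" "finite_index_in K L"
  shows "finite_index_in H L"
proof -
  obtain S where S: "S \<subseteq> carrier G" "finite S" "K \<subseteq> (\<Union>s\<in>S. s <#\<^bsub>G\<^esub> H)"
    using assms(2) unfolding finite_index_in_def by blast
  obtain T where T: "T \<subseteq> carrier G" "finite T" "L \<subseteq> (\<Union>t\<in>T. t <#\<^bsub>G\<^esub> K)"
    using assms(3) unfolding finite_index_in_def by blast
  have "L \<subseteq> (\<Union>u\<in>(\<lambda>(t, s). t \<otimes> s) ` (T \<times> S). u <#\<^bsub>G\<^esub> H)"
  proof
    fix x assume "x \<in> L"
    then obtain t k where tk: "t \<in> T" "k \<in> K" "x = t \<otimes> k"
      using T(3) unfolding l_coset_def by blast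
    moreover obtain s h where sh: "s \<in> S" "h \<in> H" "k = s \<otimes> h"
      using S(3) \<open>k \<in> K\<close> unfolding l_coset_def by blast
    ultimately have "x \<in> (t \<otimes> s) <#\<^bsub>G\<^esub> H"
      using S(1) T(1) H unfolding l_coset_def by (force simp: m_assoc)
    then show "x \<in> (\<Union>u\<in>(\<lambda>(t, s). t \<otimes> s) ` (T \<times> S). u <#\<^bsub>G\<^esub> H)"
      using tk(1) sh(1) by force
  qed
  then show ?thesis
    unfolding finite_index_in_def using S T
    by (intro exI[of _ "(\<lambda>(t, s). t \<otimes> s) ` (T \<times> S)"]) auto
qed

lemma (in group) finite_index_in_carrier_if_finite_rcosets:
  assumes H: "subgroup H G" and fin: "finite (rcosets H)"
  shows "finite_index_in H (carrier G)"
proof -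
  have "rcosets H \<subseteq> (\<lambda>c. H #> c) ` carrier G"
    by (auto simp: RCOSETS_def)
  from finite_subset_image[OF fin this]
  obtain C where C: "C \<subseteq> carrier G" "finite C" "rcosets H = (\<lambda>c. H #> c) ` C"
    by blast
  have "x \<in> (\<Union>c\<in>C. inv c <#\<^bsub>G\<^esub> H)" if x: "x \<in> carrier G" for x
  proof -
    have "H #> inv x \<in> rcosets H"
      using x H by (simp add: rcosetsI subgroup.subset)
    then obtain c where c: "c \<in> C" "H #> inv x = H #> c"
      using C(3) by auto
    then have "inv x \<otimes> inv c \<in> H"
      using x H C(1) rcos_self[of "inv x" H] subgroup.rcos_module_imp[OF H is_group]
      by (metis inv_closed subsetD)
    then have "inv (inv x \<otimes> inv c) \<in> H"
      by (rule subgroup.m_inv_closed[OF H])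
    then have "inv (inv c) \<otimes> x \<in> H"
      using x c(1) C(1) by (auto simp: inv_mult_group)
    then have "x \<in> inv c <#\<^bsub>G\<^esub> H"
      using x c(1) C(1) by (intro subgroup.lcos_module_rev[OF H is_group]) auto
    then show ?thesis using c(1) by blast
  qed
  then show ?thesis
    unfolding finite_index_in_def using C by (intro exI[of _ "m_inv G ` C"]) auto
qed

lemma (in group) finite_index_in_if_bounded_transversals:
  assumes H: "subgroup H G" and K: "K \<subseteq> carrier G"
    and bound: "\<And>T. finite T \<Longrightarrow> T \<subseteq> K \<Longrightarrow> inj_on (\<lambda>t. t <#\<^bsub>G\<^esub> H) T \<Longrightarrow> card T \<le> n"
  shows "finite_index_in H K"
proof -
  let ?transversal = "\<lambda>T. finite T \<and> T \<subseteq> K \<and> inj_on (\<lambda>t. t <#\<^bsub>G\<^esub> H) T"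
  obtain T where T: "?transversal T" and max: "\<And>T'. ?transversal T' \<Longrightarrow> card T' \<le> card T"
    using ex_has_greatest_nat[of ?transversal "{}" card "Suc n"] bound
    by (force simp: less_Suc_eq_le)
  have "x \<in> (\<Union>t\<in>T. t <#\<^bsub>G\<^esub> H)" if x: "x \<in> K" for x
  proof (rule ccontr)
    assume x_new: "x \<notin> (\<Union>t\<in>T. t <#\<^bsub>G\<^esub> H)"
    have "x \<in> x <#\<^bsub>G\<^esub> H" using x K H by (auto intro: lcos_self)
    then have "x <#\<^bsub>G\<^esub> H \<notin> (\<lambda>t. t <#\<^bsub>G\<^esub> H) ` T" using x_new by auto
    moreover have "x \<notin> T" using x_new T K H lcos_self by blast
    ultimately have "?transversal (insert x T)" using T x by auto
    then have "card (insert x T) \<le> card T" by (rule max)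
    then show False using \<open>x \<notin> T\<close> T by simp
  qed
  then show ?thesis unfolding finite_index_in_def using T K by blast
qed

locale countable_pmp_action =
  fixes \<Gamma> :: "'g monoid" and M :: "'a measure" and a :: "'g \<Rightarrow> 'a \<Rightarrow> 'a"
  assumes pmp_right_action: "pmp_right_action \<Gamma> M a"
    and countable_carrier: "countable (carrier \<Gamma>)"
begin

sublocale G: group \<Gamma>
  using pmp_right_action by (simp add: pmp_right_action_def)

sublocale P: prob_space M
  using pmp_right_action by (simp add: pmp_right_action_def)

lemma mp_map_action: "g \<in> carrier \<Gamma> \<Longrightarrow> mp_map M (a g)"
  using pmp_right_action by (simp add: pmp_right_action_def)

lemma action_measurable: "g \<in> carrier \<Gamma> \<Longrightarrow> a g \<in> M \<rightarrow>\<^sub>M M"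
  using mp_map_action by (simp add: mp_map_def)

lemma AE_action_one: "AE x in M. a \<one>\<^bsub>\<Gamma>\<^esub> x = x"
  using pmp_right_action by (simp add: pmp_right_action_def)

lemma AE_action_mult:
  "g \<in> carrier \<Gamma> \<Longrightarrow> h \<in> carrier \<Gamma> \<Longrightarrow> AE x in M. a (g \<otimes>\<^bsub>\<Gamma>\<^esub> h) x = a h (a g x)"
  using pmp_right_action by (simp add: pmp_right_action_def)

lemma AE_action_mult_all:
  assumes "g \<in> carrier \<Gamma>" "H \<subseteq> carrier \<Gamma>"
  shows "AE x in M. \<forall>h\<in>H. a (g \<otimes>\<^bsub>\<Gamma>\<^esub> h) x = a h (a g x)"
  using assms countable_subset[OF assms(2) countable_carrier]
  by (subst AE_ball_countable) (auto intro: AE_action_mult)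

lemma AE_action_inv: "g \<in> carrier \<Gamma> \<Longrightarrow> AE x in M. a (inv\<^bsub>\<Gamma>\<^esub> g) (a g x) = x"
  using AE_action_mult[of g "inv\<^bsub>\<Gamma>\<^esub> g"] AE_action_one by auto

definition same_itinerary :: "'a set \<Rightarrow> ('a \<times> 'a) set" where
  "same_itinerary U =
     {z \<in> space (M \<Otimes>\<^sub>M M). \<forall>\<gamma>\<in>carrier \<Gamma>. a \<gamma> (fst z) \<in> U \<longleftrightarrow> a \<gamma> (snd z) \<in> U}"

lemma sets_same_itinerary:
  assumes [measurable]: "U \<in> sets M"
  shows "same_itinerary U \<in> sets (M \<Otimes>\<^sub>M M)"
proof -
  have [measurable]: "a \<gamma> \<in> M \<rightarrow>\<^sub>M M" if "\<gamma> \<in> carrier \<Gamma>" for \<gamma>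
    using that by (rule action_measurable)
  have "same_itinerary U = space (M \<Otimes>\<^sub>M M) -
      (\<Union>\<gamma>\<in>carrier \<Gamma>. {z \<in> space (M \<Otimes>\<^sub>M M). \<not> (a \<gamma> (fst z) \<in> U \<longleftrightarrow> a \<gamma> (snd z) \<in> U)})"
    unfolding same_itinerary_def by blast
  also have "\<dots> \<in> sets (M \<Otimes>\<^sub>M M)"
    using countable_carrier by (intro sets.Diff sets.top sets.countable_UN'') auto
  finally show ?thesis .
qed

lemma same_itinerary_invariant:
  assumes \<delta>: "\<delta> \<in> carrier \<Gamma>"
  shows "AE z in M \<Otimes>\<^sub>M M. (case z of (x, y) \<Rightarrow> (a \<delta> x, a \<delta> y)) \<in> same_itinerary U
                            \<longleftrightarrow> z \<in> same_itinerary U"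
proof -
  have shift: "AE x in M. \<forall>\<gamma>\<in>carrier \<Gamma>. a (\<delta> \<otimes>\<^bsub>\<Gamma>\<^esub> \<gamma>) x = a \<gamma> (a \<delta> x)"
    using \<delta> by (rule AE_action_mult_all) simp
  have left_mult: "(\<lambda>\<gamma>. \<delta> \<otimes>\<^bsub>\<Gamma>\<^esub> \<gamma>) ` carrier \<Gamma> = carrier \<Gamma>"
    using \<delta> by (rule G.surj_const_mult)
  show ?thesis
    using AE_pair_fst[OF P.sigma_finite_measure shift] AE_pair_snd[OF P.sigma_finite_measure shift]
      AE_space
  proof eventually_elim
    case (elim z)
    obtain x y where z: "z = (x, y)" by (cases z)
    have "(a \<delta> x, a \<delta> y) \<in> space (M \<Otimes>\<^sub>M M)"
      using elim(3) z measurable_space[OF action_measurable[OF \<delta>]] by (auto simp: space_pair_measure)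
    then have "(a \<delta> x, a \<delta> y) \<in> same_itinerary U \<longleftrightarrow>
        (\<forall>\<gamma>\<in>carrier \<Gamma>. a (\<delta> \<otimes>\<^bsub>\<Gamma>\<^esub> \<gamma>) x \<in> U \<longleftrightarrow> a (\<delta> \<otimes>\<^bsub>\<Gamma>\<^esub> \<gamma>) y \<in> U)"
      using elim(1,2) z by (auto simp: same_itinerary_def)
    also have "\<dots> \<longleftrightarrow> (\<forall>\<gamma>\<in>carrier \<Gamma>. a \<gamma> x \<in> U \<longleftrightarrow> a \<gamma> y \<in> U)"
      by (subst (2) left_mult[symmetric]) simp
    finally show ?case
      using elim(3) z by (simp add: same_itinerary_def)
  qed
qed

lemma same_itinerary_null_or_conull:
  assumes "weakly_mixing \<Gamma> M a" "U \<in> sets M"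
  shows "emeasure (M \<Otimes>\<^sub>M M) (same_itinerary U) = 0 \<or> emeasure (M \<Otimes>\<^sub>M M) (same_itinerary U) = 1"
  using assms sets_same_itinerary same_itinerary_invariant
  unfolding weakly_mixing_def ergodic_def by blast

lemma AE_invariant_along_lcoset:
  assumes H: "H \<subseteq> carrier \<Gamma>" and k: "k \<in> carrier \<Gamma>"
    and inv: "\<forall>h\<in>H. AE x in M. a h x \<in> U \<longleftrightarrow> x \<in> U"
  shows "AE x in M. \<forall>h\<in>H. a (k \<otimes>\<^bsub>\<Gamma>\<^esub> h) x \<in> U \<longleftrightarrow> a k x \<in> U"
proof -
  have "AE x in M. \<forall>h\<in>H. a h (a k x) \<in> U \<longleftrightarrow> a k x \<in> U"
    using inv countable_subset[OF H countable_carrier]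
    by (intro AE_mp_map[OF mp_map_action[OF k]]) (simp add: AE_ball_countable)
  with AE_action_mult_all[OF k H] show ?thesis by eventually_elim simp
qed

lemma AE_atom_square_same_itinerary:
  assumes H: "H \<subseteq> carrier \<Gamma>" and inv: "\<forall>h\<in>H. AE x in M. a h x \<in> U \<longleftrightarrow> x \<in> U"
    and K: "K \<subseteq> carrier \<Gamma>" "finite K" "carrier \<Gamma> \<subseteq> (\<Union>k\<in>K. k <#\<^bsub>\<Gamma>\<^esub> H)"
    and atom: "\<forall>k\<in>K. P \<subseteq> a k -` U \<or> P \<inter> a k -` U = {}"
  shows "AE z in M \<Otimes>\<^sub>M M. z \<in> P \<times> P \<longrightarrow> z \<in> same_itinerary U"
proof -
  have "AE x in M. \<forall>k\<in>K. \<forall>h\<in>H. a (k \<otimes>\<^bsub>\<Gamma>\<^esub> h) x \<in> U \<longleftrightarrow> a k x \<in> U"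
    using K by (intro AE_finite_allI AE_invariant_along_lcoset[OF H _ inv]) auto
  note coset_reduction = AE_pair_fst[OF P.sigma_finite_measure this]
    AE_pair_snd[OF P.sigma_finite_measure this]
  show ?thesis
    using coset_reduction AE_space
  proof eventually_elim
    case (elim z)
    obtain x y where z: "z = (x, y)" by (cases z)
    have "a \<gamma> x \<in> U \<longleftrightarrow> a \<gamma> y \<in> U" if "z \<in> P \<times> P" "\<gamma> \<in> carrier \<Gamma>" for \<gamma>
    proof -
      obtain k h where kh: "k \<in> K" "h \<in> H" "\<gamma> = k \<otimes>\<^bsub>\<Gamma>\<^esub> h"
        using K(3) \<open>\<gamma> \<in> carrier \<Gamma>\<close> unfolding l_coset_def by blast
      have "a \<gamma> x \<in> U \<longleftrightarrow> a k x \<in> U" using elim(1) z kh by simp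
      also have "\<dots> \<longleftrightarrow> a k y \<in> U" using atom kh(1) \<open>z \<in> P \<times> P\<close> z by blast
      also have "\<dots> \<longleftrightarrow> a \<gamma> y \<in> U" using elim(2) z kh by simp
      finally show ?thesis .
    qed
    then show ?case
      using elim(3) z by (simp add: same_itinerary_def)
  qed
qed

text \<open>For an \<open>H\<close>-invariant \<open>U\<close>, the pairs with the same itinerary form a
  \<open>\<Gamma>\<close>-invariant set, null or conull by weak mixing. On a square \<open>P \<times> P\<close> with \<open>P\<close> an
  atom of the finitely many sets \<open>U\<cdot>k\<inverse>\<close>, \<open>k\<close> running over representatives of the left
  cosets of \<open>H\<close>, itineraries agree, so it is conull; hence so is
  \<open>{(x, y). x \<in> U \<longleftrightarrow> y \<in> U}\<close>.\<close>

lemma ergodic_if_finite_index: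
  assumes wm: "weakly_mixing \<Gamma> M a" and H: "H \<subseteq> carrier \<Gamma>"
    and finite_index: "G.finite_index_in H (carrier \<Gamma>)"
  shows "ergodic (\<Gamma>\<lparr>carrier := H\<rparr>) M a"
  unfolding ergodic_def
proof (intro ballI impI)
  fix U assume U: "U \<in> sets M" and "\<forall>h\<in>carrier (\<Gamma>\<lparr>carrier := H\<rparr>). AE x in M. a h x \<in> U \<longleftrightarrow> x \<in> U"
  then have inv: "\<forall>h\<in>H. AE x in M. a h x \<in> U \<longleftrightarrow> x \<in> U" by simp
  obtain K where K: "K \<subseteq> carrier \<Gamma>" "finite K" "carrier \<Gamma> \<subseteq> (\<Union>k\<in>K. k <#\<^bsub>\<Gamma>\<^esub> H)"
    using finite_index unfolding G.finite_index_in_def by blast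
  obtain P where P: "P \<in> sets M" "emeasure M P > 0"
      and atom: "\<forall>k\<in>K. P \<subseteq> a k -` U \<inter> space M \<or> P \<inter> (a k -` U \<inter> space M) = {}"
    using exists_positive_atom[OF K(2), of "\<lambda>k. a k -` U \<inter> space M" M] K(1) U
    by (auto simp: P.emeasure_space_1 intro: measurable_sets[OF action_measurable])
  have "P \<subseteq> space M" using P(1) by (rule sets.sets_into_space)
  with atom have "\<forall>k\<in>K. P \<subseteq> a k -` U \<or> P \<inter> a k -` U = {}" by blast
  then have "emeasure (M \<Otimes>\<^sub>M M) (P \<times> P) \<le> emeasure (M \<Otimes>\<^sub>M M) (same_itinerary U)"
    using AE_atom_square_same_itinerary[OF H inv K] sets_same_itinerary[OF U]
    by (intro emeasure_mono_AE)
  moreover have "emeasure (M \<Otimes>\<^sub>M M) (P \<times> P) > 0"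
    using P by (simp add: P.emeasure_pair_measure_Times ennreal_zero_less_mult_iff)
  ultimately have itinerary_conull: "emeasure (M \<Otimes>\<^sub>M M) (same_itinerary U) = 1"
    using same_itinerary_null_or_conull[OF wm U] by auto
  interpret PP: prob_space "M \<Otimes>\<^sub>M M"
    by (intro prob_space_pair P.prob_space_axioms)
  have "AE z in M \<Otimes>\<^sub>M M. z \<in> same_itinerary U"
    using itinerary_conull PP.prob_eq_1[OF sets_same_itinerary[OF U]] by (simp add: PP.emeasure_eq_measure)
  with AE_pair_fst[OF P.sigma_finite_measure AE_action_one]
    AE_pair_snd[OF P.sigma_finite_measure AE_action_one]
  have "AE z in M \<Otimes>\<^sub>M M. fst z \<in> U \<longleftrightarrow> snd z \<in> U"
    by eventually_elim (force simp: same_itinerary_def)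
  then show "emeasure M U = 0 \<or> emeasure M U = 1"
    by (rule P.emeasure_0_or_1_if_AE_pair_agree[OF U])
qed

text \<open>In \<open>Aut(X, \<mu>)\<close>, with the right action convention, \<open>intertwines D g h\<close> means
  \<open>g = D h D\<inverse>\<close>.\<close>

definition intertwines :: "('a \<Rightarrow> 'a) \<Rightarrow> 'g \<Rightarrow> 'g \<Rightarrow> bool" where
  "intertwines D g h \<longleftrightarrow> (AE x in M. a h (D x) = D (a g x))"

definition centralizer :: "('a \<Rightarrow> 'a) \<Rightarrow> 'g set" where
  "centralizer D = {g \<in> carrier \<Gamma>. intertwines D g g}"

lemma comm_left_eq: "comm_left \<Gamma> M a D = {g \<in> carrier \<Gamma>. \<exists>h\<in>carrier \<Gamma>. intertwines D g h}"
  by (simp add: comm_left_def intertwines_def)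

lemma intertwines_one:
  assumes "mp_map M D" shows "intertwines D \<one>\<^bsub>\<Gamma>\<^esub> \<one>\<^bsub>\<Gamma>\<^esub>"
  using AE_mp_map[OF assms AE_action_one] AE_action_one
  unfolding intertwines_def by eventually_elim auto

lemma intertwines_mult:
  assumes "g \<in> carrier \<Gamma>" "h \<in> carrier \<Gamma>" "g' \<in> carrier \<Gamma>" "h' \<in> carrier \<Gamma>"
    and "mp_map M D" "intertwines D g h" "intertwines D g' h'"
  shows "intertwines D (g \<otimes>\<^bsub>\<Gamma>\<^esub> g') (h \<otimes>\<^bsub>\<Gamma>\<^esub> h')"
proof -
  have "AE x in M. a h' (D (a g x)) = D (a g' (a g x))"
    using AE_mp_map[OF mp_map_action[OF assms(1)]] assms(7) by (simp add: intertwines_def)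
  with AE_mp_map[OF assms(5) AE_action_mult[OF assms(2,4)]] AE_action_mult[OF assms(1,3)]
    assms(6)[unfolded intertwines_def]
  show ?thesis
    unfolding intertwines_def by eventually_elim auto
qed

lemma intertwines_inv:
  assumes g: "g \<in> carrier \<Gamma>" and h: "h \<in> carrier \<Gamma>"
    and D: "mp_map M D" and gh: "intertwines D g h"
  shows "intertwines D (inv\<^bsub>\<Gamma>\<^esub> g) (inv\<^bsub>\<Gamma>\<^esub> h)"
proof -
  have g': "inv\<^bsub>\<Gamma>\<^esub> g \<in> carrier \<Gamma>" using g by simp
  have "AE x in M. a g (a (inv\<^bsub>\<Gamma>\<^esub> g) x) = x"
    using AE_action_inv[OF g'] g by simp
  moreover have "AE x in M. a h (D (a (inv\<^bsub>\<Gamma>\<^esub> g) x)) = D (a g (a (inv\<^bsub>\<Gamma>\<^esub> g) x))"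
    using AE_mp_map[OF mp_map_action[OF g']] gh by (simp add: intertwines_def)
  moreover have "AE x in M. a (inv\<^bsub>\<Gamma>\<^esub> h) (a h (D (a (inv\<^bsub>\<Gamma>\<^esub> g) x))) = D (a (inv\<^bsub>\<Gamma>\<^esub> g) x)"
    using AE_mp_map[OF mp_map_action[OF g'] AE_mp_map[OF D AE_action_inv[OF h]]] .
  ultimately show ?thesis
    unfolding intertwines_def by eventually_elim auto
qed

lemma subgroup_comm_left: "mp_map M D \<Longrightarrow> subgroup (comm_left \<Gamma> M a D) \<Gamma>"
  unfolding comm_left_eq
  by (rule subgroup.intro) (blast intro: intertwines_one intertwines_mult intertwines_inv)+

lemma subgroup_centralizer: "mp_map M D \<Longrightarrow> subgroup (centralizer D) \<Gamma>"
  unfolding centralizer_def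
  by (rule subgroup.intro) (auto intro: intertwines_one intertwines_mult intertwines_inv)

lemma AE_fixed_set_disjoint_translate:
  assumes free: "essentially_free \<Gamma> M a" and fixed: "\<forall>x\<in>A. D x = x"
    and g: "g \<in> comm_left \<Gamma> M a D" "g \<notin> centralizer D"
  shows "AE x in M. x \<in> A \<longrightarrow> a g x \<notin> A"
proof -
  obtain h where h: "h \<in> carrier \<Gamma>" "intertwines D g h" and gc: "g \<in> carrier \<Gamma>"
    using g(1) by (auto simp: comm_left_eq)
  define k where "k = inv\<^bsub>\<Gamma>\<^esub> h \<otimes>\<^bsub>\<Gamma>\<^esub> g"
  have k: "k \<in> carrier \<Gamma>" and hk: "h \<otimes>\<^bsub>\<Gamma>\<^esub> k = g"
    using gc h(1) by (simp_all add: k_def G.m_assoc[symmetric])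
  have "k \<noteq> \<one>\<^bsub>\<Gamma>\<^esub>"
    using hk h g by (auto simp: centralizer_def)
  then have "AE x in M. a k (a h x) \<noteq> a h x"
    using free k by (intro AE_mp_map[OF mp_map_action[OF h(1)]]) (simp add: essentially_free_def)
  with AE_action_mult[OF h(1) k] h(2)[unfolded intertwines_def]
  show ?thesis
    by eventually_elim (use hk fixed in auto)
qed

lemma AE_translates_disjoint:
  assumes free: "essentially_free \<Gamma> M a" and fixed: "\<forall>x\<in>A. D x = x" and D: "mp_map M D"
    and t: "t \<in> comm_left \<Gamma> M a D" "t' \<in> comm_left \<Gamma> M a D"
    and distinct: "t <#\<^bsub>\<Gamma>\<^esub> centralizer D \<noteq> t' <#\<^bsub>\<Gamma>\<^esub> centralizer D"
  shows "AE x in M. a t x \<notin> A \<or> a t' x \<notin> A"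
proof -
  interpret C: subgroup "centralizer D" \<Gamma> using D by (rule subgroup_centralizer)
  interpret L: subgroup "comm_left \<Gamma> M a D" \<Gamma> using D by (rule subgroup_comm_left)
  have tc: "t \<in> carrier \<Gamma>" "t' \<in> carrier \<Gamma>" using t by auto
  define g where "g = inv\<^bsub>\<Gamma>\<^esub> t \<otimes>\<^bsub>\<Gamma>\<^esub> t'"
  have "g \<in> comm_left \<Gamma> M a D" using t by (simp add: g_def)
  moreover have "g \<notin> centralizer D"
  proof
    assume "g \<in> centralizer D"
    then have "t' \<in> t <#\<^bsub>\<Gamma>\<^esub> centralizer D"
      using tc by (intro C.lcos_module_rev G.is_group) (auto simp: g_def)
    then show False
      using distinct tc G.l_repr_independence C.subgroup_axioms by blast
  qed
  ultimately have disjoint: "AE x in M. x \<in> A \<longrightarrow> a g x \<notin> A"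
    by (rule AE_fixed_set_disjoint_translate[OF free fixed])
  have "g \<in> carrier \<Gamma>" using tc by (simp add: g_def)
  from AE_mp_map[OF mp_map_action[OF tc(1)] disjoint]
    AE_action_mult[OF tc(1) this]
  show ?thesis
    by eventually_elim (use tc in \<open>simp add: g_def G.m_assoc[symmetric]\<close>)
qed

lemma card_transversal_mult_measure_le_1:
  assumes free: "essentially_free \<Gamma> M a" and fixed: "\<forall>x\<in>A. D x = x" and D: "mp_map M D"
    and A: "A \<in> sets M"
    and T: "finite T" "T \<subseteq> comm_left \<Gamma> M a D" "inj_on (\<lambda>t. t <#\<^bsub>\<Gamma>\<^esub> centralizer D) T"
  shows "real (card T) * measure M A \<le> 1"
proof (rule P.card_mult_measure_le_1[OF T(1), of "\<lambda>t. a t -` A \<inter> space M"])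
  fix t assume "t \<in> T"
  then have t: "t \<in> carrier \<Gamma>" using T(2) by (auto simp: comm_left_def)
  show "a t -` A \<inter> space M \<in> sets M"
    using measurable_sets[OF action_measurable[OF t] A] .
  show "measure M (a t -` A \<inter> space M) = measure M A"
    using measure_distr[OF action_measurable[OF t] A] mp_map_action[OF t]
    by (simp add: mp_map_def)
next
  show "pairwise (\<lambda>s t. AE x in M. x \<notin> a s -` A \<inter> space M \<or> x \<notin> a t -` A \<inter> space M) T"
    unfolding pairwise_def
  proof (intro ballI impI)
    fix s t assume "s \<in> T" "t \<in> T" "s \<noteq> t"
    then have "s <#\<^bsub>\<Gamma>\<^esub> centralizer D \<noteq> t <#\<^bsub>\<Gamma>\<^esub> centralizer D"
      using T(3) by (auto dest: inj_onD)
    then have "AE x in M. a s x \<notin> A \<or> a t x \<notin> A"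
      using \<open>s \<in> T\<close> \<open>t \<in> T\<close> T(2) by (intro AE_translates_disjoint[OF free fixed D]) auto
    then show "AE x in M. x \<notin> a s -` A \<inter> space M \<or> x \<notin> a t -` A \<inter> space M"
      by eventually_elim auto
  qed
qed

lemma centralizer_finite_index_in_comm_left:
  assumes "essentially_free \<Gamma> M a" "\<forall>x\<in>A. D x = x" "mp_map M D"
    and A: "A \<in> sets M" "emeasure M A > 0"
  shows "G.finite_index_in (centralizer D) (comm_left \<Gamma> M a D)"
proof (rule G.finite_index_in_if_bounded_transversals)
  show "subgroup (centralizer D) \<Gamma>" using assms(3) by (rule subgroup_centralizer)
  show "comm_left \<Gamma> M a D \<subseteq> carrier \<Gamma>" by (auto simp: comm_left_def)
  have "measure M A > 0" using A(2) by (simp add: P.emeasure_eq_measure)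
  fix T assume "finite T" "T \<subseteq> comm_left \<Gamma> M a D" "inj_on (\<lambda>t. t <#\<^bsub>\<Gamma>\<^esub> centralizer D) T"
  with card_transversal_mult_measure_le_1[OF assms(1-3) A(1)]
  have "real (card T) \<le> 1 / measure M A"
    using \<open>measure M A > 0\<close> by (simp add: field_simps)
  then show "card T \<le> nat \<lceil>1 / measure M A\<rceil>"
    by linarith
qed

definition saturation :: "'g set \<Rightarrow> 'a set \<Rightarrow> 'a set" where
  "saturation H A = (\<Union>g\<in>H. a g -` A \<inter> space M)"

lemma sets_saturation:
  assumes "H \<subseteq> carrier \<Gamma>" "A \<in> sets M"
  shows "saturation H A \<in> sets M"
  unfolding saturation_def using assms countable_subset[OF assms(1) countable_carrier]
  by (intro sets.countable_UN'') (auto intro: measurable_sets[OF action_measurable])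

lemma saturation_invariant:
  assumes H: "subgroup H \<Gamma>" and h: "h \<in> H"
  shows "AE x in M. a h x \<in> saturation H A \<longleftrightarrow> x \<in> saturation H A"
proof -
  interpret H: subgroup H \<Gamma> by (fact H)
  have left_mult: "(\<lambda>g. h \<otimes>\<^bsub>\<Gamma>\<^esub> g) ` H = H"
    using group.surj_const_mult[OF H.subgroup_is_group[OF G.is_group]] h by simp
  have hc: "h \<in> carrier \<Gamma>" using h by (rule H.mem_carrier)
  from AE_action_mult_all[OF hc H.subset] AE_space
  show ?thesis
  proof eventually_elim
    case (elim x)
    have "a h x \<in> space M" using measurable_space[OF action_measurable[OF hc]] elim(2) .
    then have "a h x \<in> saturation H A \<longleftrightarrow> (\<exists>g\<in>H. a (h \<otimes>\<^bsub>\<Gamma>\<^esub> g) x \<in> A)"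
      using elim(1) by (auto simp: saturation_def)
    also have "\<dots> \<longleftrightarrow> (\<exists>g\<in>H. a g x \<in> A)"
      by (subst (2) left_mult[symmetric]) simp
    finally show ?case
      using elim(2) by (auto simp: saturation_def)
  qed
qed

lemma AE_saturation_if_ergodic:
  assumes H: "subgroup H \<Gamma>" and erg: "ergodic (\<Gamma>\<lparr>carrier := H\<rparr>) M a"
    and A: "A \<in> sets M" "emeasure M A > 0"
  shows "AE x in M. x \<in> saturation H A"
proof -
  have sat: "saturation H A \<in> sets M"
    using H A(1) by (intro sets_saturation subgroup.subset)
  have "AE x in M. x \<in> A \<longrightarrow> x \<in> saturation H A"
    using AE_action_one AE_space
    by eventually_elim (use subgroup.one_closed[OF H] in \<open>force simp: saturation_def\<close>)
  then have "emeasure M A \<le> emeasure M (saturation H A)"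
    using sat by (rule emeasure_mono_AE)
  moreover have "emeasure M (saturation H A) = 0 \<or> emeasure M (saturation H A) = 1"
    using erg sat saturation_invariant[OF H] unfolding ergodic_def by simp
  ultimately have "emeasure M (saturation H A) = 1"
    using A(2) by auto
  then show ?thesis
    using P.prob_eq_1[OF sat] by (simp add: P.emeasure_eq_measure)
qed

lemma AE_fixed_if_translate_fixed:
  assumes D: "mp_map M D" and g: "g \<in> centralizer D" and fixed: "\<forall>x\<in>A. D x = x"
  shows "AE x in M. a g x \<in> A \<longrightarrow> D x = x"
proof -
  have gc: "g \<in> carrier \<Gamma>" using g by (simp add: centralizer_def)
  have "AE x in M. a g (D x) = D (a g x)"
    using g by (simp add: centralizer_def intertwines_def)
  with AE_mp_map[OF D AE_action_inv[OF gc]]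
    AE_action_inv[OF gc]
  show ?thesis
  proof eventually_elim
    case (elim x)
    show ?case
    proof
      assume "a g x \<in> A"
      then have commute: "a g (D x) = a g x" using elim fixed by simp
      have "D x = a (inv\<^bsub>\<Gamma>\<^esub> g) (a g (D x))" using elim by simp
      also have "\<dots> = a (inv\<^bsub>\<Gamma>\<^esub> g) (a g x)" using commute by simp
      also have "\<dots> = x" using elim by simp
      finally show "D x = x" .
    qed
  qed
qed

lemma AE_fixed_if_centralizer_ergodic:
  assumes D: "mp_map M D" and erg: "ergodic (\<Gamma>\<lparr>carrier := centralizer D\<rparr>) M a"
    and A: "A \<in> sets M" "emeasure M A > 0" and fixed: "\<forall>x\<in>A. D x = x"
  shows "AE x in M. D x = x"
proof -
  have C: "subgroup (centralizer D) \<Gamma>" using D by (rule subgroup_centralizer)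
  have "AE x in M. \<forall>g\<in>centralizer D. a g x \<in> A \<longrightarrow> D x = x"
    using AE_fixed_if_translate_fixed[OF D _ fixed]
      countable_subset[OF subgroup.subset[OF C] countable_carrier]
    by (subst AE_ball_countable) auto
  with AE_saturation_if_ergodic[OF C erg A]
  show ?thesis
    unfolding saturation_def by eventually_elim blast
qed

end

theorem lemma6p11:
  fixes \<Gamma> :: "'g monoid" and M :: "'a measure" and a :: "'g \<Rightarrow> 'a \<Rightarrow> 'a" and D :: "'a \<Rightarrow> 'a"
  assumes "pmp_right_action \<Gamma> M a"
    and "countable (carrier \<Gamma>)"
    and "essentially_free \<Gamma> M a"
    and "weakly_mixing \<Gamma> M a"
    and "in_commensurator \<Gamma> M a D"
    and "A \<in> sets M" and "emeasure M A > 0"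
    and "\<forall>x\<in>A. D x = x"
  shows "AE x in M. D x = x"
proof -
  interpret countable_pmp_action \<Gamma> M a
    using assms(1,2) by (rule countable_pmp_action.intro)
  have D: "mp_map M D" and finite_rcosets: "finite (rcosets\<^bsub>\<Gamma>\<^esub> (comm_left \<Gamma> M a D))"
    using assms(5) by (auto simp: in_commensurator_def aut_def)
  have "G.finite_index_in (centralizer D) (comm_left \<Gamma> M a D)"
    using assms(3,8) D assms(6,7) by (rule centralizer_finite_index_in_comm_left)
  moreover have "G.finite_index_in (comm_left \<Gamma> M a D) (carrier \<Gamma>)"
    using subgroup_comm_left[OF D] finite_rcosets by (rule G.finite_index_in_carrier_if_finite_rcosets)
  ultimately have "G.finite_index_in (centralizer D) (carrier \<Gamma>)"
    using subgroup.subset[OF subgroup_centralizer[OF D]] G.finite_index_in_trans by blast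
  then have "ergodic (\<Gamma>\<lparr>carrier := centralizer D\<rparr>) M a"
    using assms(4) subgroup.subset[OF subgroup_centralizer[OF D]] by (intro ergodic_if_finite_index)
  then show ?thesis
    by (rule AE_fixed_if_centralizer_ergodic[OF D _ assms(6-8)])
qed

end
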